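(* Let $\mathcal P$ be a compact subset of $\mathcal W$ and let $P(1),P(2),P(3),\ldots$ be a sequence of matrices from $\mathcal P$. Suppose $j_1<j_2<\cdots$ is an infinite increasing sequence of indices such that each $P(j_r)$ is a Sarymsakov matrix (i.e., $P(j_r)\in\mathcal S_1$) and the set $\bigcup_{r\ge1}\{P(j_r)\}$ is compact. If there exists an integer $T$ such that $j_{r+1}-j_r\le T$ for all $r\ge1$, then $P(k)\cdots P(2)P(1)$ converges as $k\to\infty$ to a rank-one matrix of the form $\mathbf 1c^T$ with $c_i\ge0$ and $\sum_i c_i=1$.
   Context: Let $\mathcal N=\{1,\ldots,n\}$; all matrices are $n\times n$. A matrix is stochastic if it is entrywise nonnegative with row sums $1$. For stochastic $P$ and $\mathcal A\subseteq\mathcal N$, $F_P(\mathcal A)=\{j:\ p_{ij}>0\text{ for some } i\in\mathcal A\}$. $\mathcal S_1$ (Sarymsakov matrices) is the set of stochastic $P$ such that for any disjoint nonempty $\mathcal A,\tilde{\mathcal A}\subseteq\mathcal N$, either $F_P(\mathcal A)\cap F_P(\tilde{\mathcal A})\neq\emptyset$, or $F_P(\mathcal A)\cap F_P(\tilde{\mathcal A})=\emptyset$ and $|F_P(\mathcal A)\cup F_P(\tilde{\mathcal A})|>|\mathcal A\cup\tilde{\mathcal A}|$. $\mathcal W$ is the set of stochastic $P$ such that for any disjoint nonempty $\mathcal A,\tilde{\mathcal A}\subseteq\mathcal N$, either $F_P(\mathcal A)\cap F_P(\tilde{\mathcal A})\neq\emptyset$, or $F_P(\mathcal A)\cap F_P(\tilde{\mathcal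 A})=\emptyset$ and $|F_P(\mathcal A)\cup F_P(\tilde{\mathcal A})|\ge|\mathcal A\cup\tilde{\mathcal A}|$. $\mathbf 1$ is the all-ones column vector. *)

theory Defs
  imports "HOL-Analysis.Analysis"
begin

text \<open>n x n real matrices are represented as real^'n^'n, with index type 'n finite
  (playing the role of N = {1..n}).\<close>

definition stochastic :: "real^'n::finite^'n \<Rightarrow> bool" where
  "stochastic P \<longleftrightarrow> (\<forall>i j. P $ i $ j \<ge> 0) \<and> (\<forall>i. (\<Sum>j\<in>UNIV. P $ i $ j) = 1)"

definition Fset :: "real^'n::finite^'n \<Rightarrow> 'n set \<Rightarrow> 'n set" where
  "Fset P A = {j. \<exists>i\<in>A. P $ i $ j > 0}"

definition sarymsakov :: "real^'n::finite^'n \<Rightarrow> bool" where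
  "sarymsakov P \<longleftrightarrow> stochastic P \<and>
     (\<forall>A B. A \<noteq> {} \<and> B \<noteq> {} \<and> A \<inter> B = {} \<longrightarrow>
        Fset P A \<inter> Fset P B \<noteq> {} \<or>
        (Fset P A \<inter> Fset P B = {} \<and> card (Fset P A \<union> Fset P B) > card (A \<union> B)))"

definition classW :: "real^'n::finite^'n \<Rightarrow> bool" where
  "classW P \<longleftrightarrow> stochastic P \<and>
     (\<forall>A B. A \<noteq> {} \<and> B \<noteq> {} \<and> A \<inter> B = {} \<longrightarrow>
        Fset P A \<inter> Fset P B \<noteq> {} \<or>
        (Fset P A \<inter> Fset P B = {} \<and> card (Fset P A \<union> Fset P B) \<ge> card (A \<union> B)))"

fun lprod :: "(nat \<Rightarrow> real^'n::finite^'n) \<Rightarrow> nat \<Rightarrow> real^'n^'n" where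
  "lprod P 0 = mat 1"
| "lprod P (Suc k) = P (Suc k) ** lprod P k"

end

theory Submission
  imports Defs
begin

text \<open>
  Say a stochastic matrix M expands by k if any two disjoint nonempty sets of indices either have
  overlapping supports or have joint support larger than themselves by at least k. Matrices in W
  expand by 0, Sarymsakov matrices by 1, and expansions add up under products. Since T bounds the
  gaps between Sarymsakov factors, every block of at most n T consecutive factors containing n
  Sarymsakov factors expands by n; as no set has more than n elements, any two rows of such a block
  share a positive column, i.e. the block is scrambling. These blocks range over a compact set of
  products, on which the overlap of any two rows is bounded below by some c > 0, so each block
  shrinks the oscillation of every column by the factor 1 - c while no factor increases it.
  Hence every column of P(k) \<dots> P(1) converges to a constant vector.
\<close>

section \<open>Stochastic matrices and supports\<close>

lemma stochastic_matrix_mult: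
  assumes "stochastic X" "stochastic Y"
  shows "stochastic (X ** Y)"
proof -
  have "(\<Sum>k\<in>UNIV. (X ** Y) $ i $ k) = 1" for i
  proof -
    have "(\<Sum>k\<in>UNIV. (X ** Y) $ i $ k) = (\<Sum>k\<in>UNIV. \<Sum>m\<in>UNIV. X $ i $ m * Y $ m $ k)"
      by (simp add: matrix_matrix_mult_def)
    also have "\<dots> = (\<Sum>m\<in>UNIV. \<Sum>k\<in>UNIV. X $ i $ m * Y $ m $ k)"
      by (rule sum.swap)
    also have "\<dots> = (\<Sum>m\<in>UNIV. X $ i $ m * (\<Sum>k\<in>UNIV. Y $ m $ k))"
      by (simp add: sum_distrib_left)
    also have "\<dots> = 1"
      using assms unfolding stochastic_def by simp
    finally show ?thesis .
  qed
  moreover have "(X ** Y) $ i $ k \<ge> 0" for i k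
    using assms unfolding stochastic_def matrix_matrix_mult_def
    by (simp add: sum_nonneg)
  ultimately show ?thesis
    unfolding stochastic_def by auto
qed

lemma stochastic_mat_1: "stochastic (mat 1 :: real^'n::finite^'n)"
  unfolding stochastic_def mat_def by (auto simp: if_distrib cong: if_cong)

lemma stochastic_row_ex_pos:
  assumes "stochastic X"
  obtains k where "X $ i $ k > 0"
proof -
  have "(\<Sum>k\<in>UNIV. X $ i $ k) \<noteq> 0"
    using assms unfolding stochastic_def by simp
  then obtain k where "X $ i $ k \<noteq> 0"
    by (meson sum.neutral)
  moreover have "X $ i $ k \<ge> 0"
    using assms unfolding stochastic_def by simp
  ultimately have "X $ i $ k > 0"
    by linarith
  then show thesis
    by (rule that)
qed

lemma matrix_mult_pos_iff:
  assumes "stochastic X" "stochastic Y"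
  shows "(X ** Y) $ i $ k > 0 \<longleftrightarrow> (\<exists>m. X $ i $ m > 0 \<and> Y $ m $ k > 0)"
proof -
  have nonneg: "\<And>m. 0 \<le> X $ i $ m" "\<And>m. 0 \<le> Y $ m $ k"
    using assms unfolding stochastic_def by simp_all
  have "(X ** Y) $ i $ k > 0 \<longleftrightarrow> (\<Sum>m\<in>UNIV. X $ i $ m * Y $ m $ k) > 0"
    by (simp add: matrix_matrix_mult_def)
  also have "\<dots> \<longleftrightarrow> (\<exists>m. X $ i $ m * Y $ m $ k > 0)"
  proof
    assume "(\<Sum>m\<in>UNIV. X $ i $ m * Y $ m $ k) > 0"
    then show "\<exists>m. X $ i $ m * Y $ m $ k > 0"
      by (meson not_less sum_nonpos)
  next
    assume "\<exists>m. X $ i $ m * Y $ m $ k > 0"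
    then obtain m where "X $ i $ m * Y $ m $ k > 0"
      by blast
    then show "(\<Sum>m\<in>UNIV. X $ i $ m * Y $ m $ k) > 0"
      using nonneg by (intro sum_pos2[of UNIV m]) simp_all
  qed
  also have "\<dots> \<longleftrightarrow> (\<exists>m. X $ i $ m > 0 \<and> Y $ m $ k > 0)"
    using nonneg by (simp add: zero_less_mult_iff not_less[symmetric])
  finally show ?thesis .
qed

lemma Fset_matrix_mult:
  assumes "stochastic X" "stochastic Y"
  shows "Fset (X ** Y) A = Fset Y (Fset X A)"
  unfolding Fset_def matrix_mult_pos_iff[OF assms] by blast

lemma Fset_nonempty:
  assumes "stochastic X" "A \<noteq> {}"
  shows "Fset X A \<noteq> {}"
proof -
  obtain a where "a \<in> A"
    using assms(2) by blast
  moreover obtain k where "X $ a $ k > 0"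
    using stochastic_row_ex_pos[OF assms(1)] by blast
  ultimately show ?thesis
    unfolding Fset_def by blast
qed

section \<open>Expansion and scrambling\<close>

definition expands :: "nat \<Rightarrow> real^'n::finite^'n \<Rightarrow> bool" where
  "expands k M \<longleftrightarrow> (\<forall>A B. A \<noteq> {} \<and> B \<noteq> {} \<and> A \<inter> B = {} \<longrightarrow>
     Fset M A \<inter> Fset M B \<noteq> {} \<or> card (Fset M A \<union> Fset M B) \<ge> card (A \<union> B) + k)"

definition scrambling :: "real^'n::finite^'n \<Rightarrow> bool" where
  "scrambling M \<longleftrightarrow> (\<forall>i k. \<exists>l. M $ i $ l > 0 \<and> M $ k $ l > 0)"

lemma expandsD:
  "expands k M \<Longrightarrow> A \<noteq> {} \<Longrightarrow> B \<noteq> {} \<Longrightarrow> A \<inter> B = {} \<Longrightarrow>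
    Fset M A \<inter> Fset M B \<noteq> {} \<or> card (Fset M A \<union> Fset M B) \<ge> card (A \<union> B) + k"
  unfolding expands_def by blast

lemma classW_iff_expands: "classW M \<longleftrightarrow> stochastic M \<and> expands 0 M"
  unfolding classW_def expands_def by auto

lemma sarymsakov_iff_expands: "sarymsakov M \<longleftrightarrow> stochastic M \<and> expands 1 M"
  unfolding sarymsakov_def expands_def by (auto simp: Suc_le_eq)

lemma expands_mat_1: "expands 0 (mat 1 :: real^'n::finite^'n)"
proof -
  have "Fset (mat 1 :: real^'n^'n) A = A" for A
    unfolding Fset_def mat_def by auto
  then show ?thesis
    unfolding expands_def by auto
qed

lemma expands_matrix_mult:
  assumes "stochastic X" "stochastic Y" "expands k X" "expands m Y"
  shows "expands (k + m) (X ** Y)"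
  unfolding expands_def Fset_matrix_mult[OF assms(1,2)]
proof (intro allI impI)
  fix A B :: "'a set"
  assume AB: "A \<noteq> {} \<and> B \<noteq> {} \<and> A \<inter> B = {}"
  let ?A = "Fset X A" and ?B = "Fset X B"
  show "Fset Y ?A \<inter> Fset Y ?B \<noteq> {} \<or> card (Fset Y ?A \<union> Fset Y ?B) \<ge> card (A \<union> B) + (k + m)"
  proof (cases "?A \<inter> ?B = {}")
    case False
    then obtain z where "z \<in> ?A" "z \<in> ?B"
      by auto
    moreover obtain l where "Y $ z $ l > 0"
      using stochastic_row_ex_pos[OF assms(2)] by blast
    ultimately show ?thesis
      unfolding Fset_def by blast
  next
    case True
    then have "card (?A \<union> ?B) \<ge> card (A \<union> B) + k"
      using expandsD[OF assms(3)] AB by blast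
    moreover have "?A \<noteq> {}" "?B \<noteq> {}"
      using AB Fset_nonempty[OF assms(1)] by auto
    then have "Fset Y ?A \<inter> Fset Y ?B \<noteq> {} \<or> card (Fset Y ?A \<union> Fset Y ?B) \<ge> card (?A \<union> ?B) + m"
      using expandsD[OF assms(4)] True by blast
    ultimately show ?thesis
      by linarith
  qed
qed

lemma expands_card_imp_scrambling:
  assumes "stochastic M" "expands CARD('n) (M :: real^'n::finite^'n)"
  shows "scrambling M"
  unfolding scrambling_def
proof (intro allI)
  fix i k :: 'n
  show "\<exists>l. M $ i $ l > 0 \<and> M $ k $ l > 0"
  proof (cases "i = k")
    case True
    obtain l where "M $ i $ l > 0"
      using stochastic_row_ex_pos[OF assms(1)] by blast
    with True show ?thesis
      by blast
  next
    case False
    have "card (Fset M {i} \<union> Fset M {k}) \<le> CARD('n)"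
      by (rule card_mono) auto
    then have "\<not> card (Fset M {i} \<union> Fset M {k}) \<ge> card ({i} \<union> {k}) + CARD('n)"
      using False by simp
    then have "Fset M {i} \<inter> Fset M {k} \<noteq> {}"
      using expandsD[OF assms(2), of "{i}" "{k}"] False by blast
    then show ?thesis
      unfolding Fset_def by auto
  qed
qed

section \<open>Compact sets of products\<close>

definition matrix_set_mult :: "(real^'n::finite^'n) set \<Rightarrow> (real^'n^'n) set \<Rightarrow> (real^'n^'n) set" where
  "matrix_set_mult X Y = (\<lambda>p. fst p ** snd p) ` (X \<times> Y)"

lemma matrix_set_multI: "A \<in> X \<Longrightarrow> B \<in> Y \<Longrightarrow> A ** B \<in> matrix_set_mult X Y"
  unfolding matrix_set_mult_def by (rule image_eqI[of _ _ "(A, B)"]) auto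

lemma matrix_set_multE:
  assumes "M \<in> matrix_set_mult X Y"
  obtains A B where "A \<in> X" "B \<in> Y" "M = A ** B"
  using assms unfolding matrix_set_mult_def by auto

lemma continuous_on_matrix_mult:
  "continuous_on S (\<lambda>p :: (real^'n::finite^'n) \<times> (real^'n^'n). fst p ** snd p)"
  unfolding matrix_matrix_mult_def by (intro continuous_intros)

lemma compact_matrix_set_mult: "compact X \<Longrightarrow> compact Y \<Longrightarrow> compact (matrix_set_mult X Y)"
  unfolding matrix_set_mult_def
  by (intro compact_continuous_image continuous_on_matrix_mult compact_Times)

text \<open>Products of L factors, s of them taken from S and the others from Q.\<close>

fun products :: "(real^'n::finite^'n) set \<Rightarrow> (real^'n^'n) set \<Rightarrow> nat \<Rightarrow> nat \<Rightarrow> (real^'n^'n) set" where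
  "products Q S 0 s = (if s = 0 then {mat 1} else {})"
| "products Q S (Suc L) 0 = matrix_set_mult Q (products Q S L 0)"
| "products Q S (Suc L) (Suc s) =
     matrix_set_mult Q (products Q S L (Suc s)) \<union> matrix_set_mult S (products Q S L s)"

lemma compact_products: "compact Q \<Longrightarrow> compact S \<Longrightarrow> compact (products Q S L s)"
  by (induction Q S L s rule: products.induct) (auto intro!: compact_matrix_set_mult compact_Un)

lemma matrix_set_mult_stochastic_expands:
  assumes "\<forall>A\<in>X. stochastic A \<and> expands k A" "\<forall>B\<in>Y. stochastic B \<and> expands m B"
  shows "\<forall>M\<in>matrix_set_mult X Y. stochastic M \<and> expands (k + m) M"
proof
  fix M
  assume "M \<in> matrix_set_mult X Y"
  then obtain A B where "A \<in> X" "B \<in> Y" "M = A ** B"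
    by (rule matrix_set_multE)
  then show "stochastic M \<and> expands (k + m) M"
    using assms by (simp add: stochastic_matrix_mult expands_matrix_mult)
qed

lemma products_stochastic_expands:
  assumes "\<forall>M\<in>Q. stochastic M \<and> expands 0 M" "\<forall>M\<in>S. stochastic M \<and> expands 1 M"
  shows "\<forall>M\<in>products Q S L s. stochastic M \<and> expands s M"
  using assms
proof (induction Q S L s rule: products.induct)
  case (1 Q S s)
  then show ?case
    by (simp add: stochastic_mat_1 expands_mat_1)
next
  case (2 Q S L)
  have "\<forall>M\<in>products Q S L 0. stochastic M \<and> expands 0 M"
    using "2.IH"[OF "2.prems"] .
  from matrix_set_mult_stochastic_expands[OF "2.prems"(1) this]
  show ?case
    by simp
next
  case (3 Q S L s)
  have "\<forall>M\<in>products Q S L (Suc s). stochastic M \<and> expands (Suc s) M"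
    "\<forall>M\<in>products Q S L s. stochastic M \<and> expands s M"
    using "3.IH"[OF "3.prems"] .
  from matrix_set_mult_stochastic_expands[OF "3.prems"(1) this(1)]
    matrix_set_mult_stochastic_expands[OF "3.prems"(2) this(2)]
  show ?case
    by (simp add: ball_Un)
qed

section \<open>Left products over windows\<close>

lemma lprod_stochastic: "\<forall>k\<ge>1. stochastic (P k) \<Longrightarrow> stochastic (lprod P k)"
  by (induction k) (auto intro: stochastic_matrix_mult stochastic_mat_1)

fun segment_prod :: "(nat \<Rightarrow> real^'n::finite^'n) \<Rightarrow> nat \<Rightarrow> nat \<Rightarrow> real^'n^'n" where
  "segment_prod P a 0 = mat 1"
| "segment_prod P a (Suc m) = P (a + Suc m) ** segment_prod P a m"

lemma lprod_add: "lprod P (a + m) = segment_prod P a m ** lprod P a"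
  by (induction m) (auto simp: matrix_mul_assoc)

lemma segment_prod_in_products:
  fixes j :: "nat \<Rightarrow> nat"
  assumes j: "strict_mono j" and Q: "\<forall>k\<ge>1. P k \<in> Q"
  shows "segment_prod P a m \<in> products Q (range (\<lambda>r. P (j r))) m (card {r. a < j r \<and> j r \<le> a + m})"
proof (induction m)
  case 0
  have "card {r. a < j r \<and> j r \<le> a} = 0"
    by (simp add: card_eq_0_iff)
  then show ?case
    by simp
next
  case (Suc m)
  let ?S = "range (\<lambda>r. P (j r))"
  let ?C = "{r. a < j r \<and> j r \<le> a + m}"
  have "finite ?C"
    by (rule finite_subset[of _ "{..a + m}"])
      (use strict_mono_imp_increasing[OF j] in \<open>auto intro: order_trans\<close>)
  have split: "{r. a < j r \<and> j r \<le> a + Suc m} = {r. j r = a + Suc m} \<union> ?C"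
    by (auto simp: le_Suc_eq)
  show ?case
  proof (cases "\<exists>r0. j r0 = a + Suc m")
    case True
    then obtain r0 where r0: "j r0 = a + Suc m"
      by blast
    have "{r. j r = a + Suc m} = {r0}"
      unfolding r0[symmetric] strict_mono_eq[OF j] by simp
    then have "card {r. a < j r \<and> j r \<le> a + Suc m} = Suc (card ?C)"
      unfolding split using \<open>finite ?C\<close> r0 by simp
    moreover have "P (a + Suc m) \<in> ?S"
      unfolding r0[symmetric] by (rule rangeI)
    then have "segment_prod P a (Suc m) \<in> matrix_set_mult ?S (products Q ?S m (card ?C))"
      using matrix_set_multI[OF _ Suc.IH] by simp
    ultimately show ?thesis
      by simp
  next
    case False
    then have "{r. a < j r \<and> j r \<le> a + Suc m} = ?C"
      unfolding split by blast
    moreover have "segment_prod P a (Suc m) \<in> matrix_set_mult Q (products Q ?S m (card ?C))"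
      using matrix_set_multI[OF _ Suc.IH] Q by simp
    ultimately show ?thesis
      by (cases "card ?C") simp_all
  qed
qed

lemma strict_mono_gap_sum:
  fixes j :: "nat \<Rightarrow> nat"
  assumes "strict_mono j" "\<forall>r. j (Suc r) - j r \<le> T"
  shows "j (q + m) - j q \<le> m * T"
proof (induction m)
  case (Suc m)
  have "j q \<le> j (q + m)" "j (q + m) \<le> j (Suc (q + m))"
    using assms(1) by (auto simp: strict_mono_less_eq)
  with Suc assms(2)[rule_format, of "q + m"] show ?case
    by simp
qed simp

lemma card_strict_mono_window:
  fixes j :: "nat \<Rightarrow> nat"
  assumes "strict_mono j"
  shows "card {r. j q < j r \<and> j r \<le> j q + (j (q + N) - j q)} = N"
proof -
  have "j q \<le> j (q + N)"
    using assms by (simp add: strict_mono_less_eq)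
  then have "{r. j q < j r \<and> j r \<le> j q + (j (q + N) - j q)} = {q<..q + N}"
    using assms by (auto simp: strict_mono_less strict_mono_less_eq)
  then show ?thesis
    by simp
qed

lemma lprod_block_factorization:
  fixes j :: "nat \<Rightarrow> nat"
  assumes "strict_mono j" "\<forall>k\<ge>1. P k \<in> Q" "\<forall>r. j (Suc r) - j r \<le> T"
  shows "\<exists>L\<le>N * T. \<exists>M\<in>products Q (range (\<lambda>r. P (j r))) L N. lprod P (j (q + N)) = M ** lprod P (j q)"
proof (intro exI conjI bexI)
  let ?L = "j (q + N) - j q"
  show "?L \<le> N * T"
    using strict_mono_gap_sum[OF assms(1,3)] by (simp add: mult.commute)
  have "j q \<le> j (q + N)"
    using assms(1) by (simp add: strict_mono_less_eq)
  then show "lprod P (j (q + N)) = segment_prod P (j q) ?L ** lprod P (j q)"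
    using lprod_add[of P "j q" ?L] by simp
  show "segment_prod P (j q) ?L \<in> products Q (range (\<lambda>r. P (j r))) ?L N"
    using segment_prod_in_products[OF assms(1,2), of "j q" ?L]
    unfolding card_strict_mono_window[OF assms(1)] .
qed

section \<open>Row overlaps and contraction of columns\<close>

definition row_overlap :: "real^'n::finite^'n \<Rightarrow> 'n \<Rightarrow> 'n \<Rightarrow> real" where
  "row_overlap M i k = (\<Sum>l\<in>UNIV. min (M $ i $ l) (M $ k $ l))"

lemma compact_continuous_pos_bounded_below:
  fixes f :: "'a::topological_space \<Rightarrow> real"
  assumes "compact K" "continuous_on K f" "\<forall>x\<in>K. 0 < f x"
  obtains c where "0 < c" "\<forall>x\<in>K. c \<le> f x"
proof (cases "K = {}")
  case True
  then show thesis
    using that[of 1] by simp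
next
  case False
  then obtain x0 where "x0 \<in> K" "\<forall>x\<in>K. f x0 \<le> f x"
    using continuous_attains_inf[OF assms(1) False assms(2)] by blast
  with assms(3) that show thesis
    by blast
qed

lemma compact_scrambling_overlap_bound:
  fixes K :: "(real^'n::finite^'n) set"
  assumes "compact K" "\<forall>M\<in>K. stochastic M \<and> scrambling M"
  obtains c where "0 < c" "c \<le> 1" "\<forall>M\<in>K. \<forall>i k. c \<le> row_overlap M i k"
proof -
  have "\<forall>p. \<exists>c. 0 < c \<and> (\<forall>M\<in>K. c \<le> row_overlap M (fst p) (snd p))"
  proof
    fix p :: "'n \<times> 'n"
    have "\<forall>M\<in>K. 0 < row_overlap M (fst p) (snd p)"
    proof
      fix M
      assume "M \<in> K"
      then obtain l where "M $ fst p $ l > 0" "M $ snd p $ l > 0"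
        using assms(2) unfolding scrambling_def by blast
      with \<open>M \<in> K\<close> show "0 < row_overlap M (fst p) (snd p)"
        using assms(2) unfolding row_overlap_def stochastic_def
        by (intro sum_pos2[of UNIV l]) auto
    qed
    moreover have "continuous_on K (\<lambda>M. row_overlap M (fst p) (snd p))"
      unfolding row_overlap_def by (intro continuous_intros)
    ultimately obtain c where "0 < c" "\<forall>M\<in>K. c \<le> row_overlap M (fst p) (snd p)"
      using compact_continuous_pos_bounded_below[OF assms(1)] by blast
    then show "\<exists>c. 0 < c \<and> (\<forall>M\<in>K. c \<le> row_overlap M (fst p) (snd p))"
      by blast
  qed
  from choice[OF this] obtain b
    where b: "\<And>p. 0 < b p" "\<And>p. \<forall>M\<in>K. b p \<le> row_overlap M (fst p) (snd p)"
    by blast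
  show thesis
  proof (rule that)
    show "0 < min 1 (Min (range b))"
      using b(1) by (auto simp: Min_gr_iff)
    show "\<forall>M\<in>K. \<forall>i k. min 1 (Min (range b)) \<le> row_overlap M i k"
    proof (intro ballI allI)
      fix M i k
      assume "M \<in> K"
      have "min 1 (Min (range b)) \<le> b (i, k)"
        by (simp add: min.coboundedI2)
      also have "\<dots> \<le> row_overlap M i k"
        using b(2)[of "(i, k)"] \<open>M \<in> K\<close> by simp
      finally show "min 1 (Min (range b)) \<le> row_overlap M i k" .
    qed
  qed simp
qed

definition max_entry :: "real^'n::finite \<Rightarrow> real" where
  "max_entry x = Max (range (($) x))"

definition min_entry :: "real^'n::finite \<Rightarrow> real" where
  "min_entry x = Min (range (($) x))"

lemma min_entry_le_max_entry: "min_entry x \<le> x $ i \<and> x $ i \<le> max_entry x"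
  unfolding min_entry_def max_entry_def by simp

lemma max_entry_attained: obtains i where "max_entry x = x $ i"
proof -
  have "max_entry x \<in> range (($) x)"
    unfolding max_entry_def by (rule Max_in) auto
  with that show thesis
    by blast
qed

lemma min_entry_attained: obtains i where "min_entry x = x $ i"
proof -
  have "min_entry x \<in> range (($) x)"
    unfolding min_entry_def by (rule Min_in) auto
  with that show thesis
    by blast
qed

lemma stochastic_mult_vec_bounds:
  assumes "stochastic M"
  shows "min_entry x \<le> (M *v x) $ i \<and> (M *v x) $ i \<le> max_entry x"
proof -
  have row: "(\<Sum>l\<in>UNIV. M $ i $ l) = 1" "\<forall>l. 0 \<le> M $ i $ l"
    using assms unfolding stochastic_def by auto
  have "(\<Sum>l\<in>UNIV. M $ i $ l * min_entry x) \<le> (M *v x) $ i"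
    "(M *v x) $ i \<le> (\<Sum>l\<in>UNIV. M $ i $ l * max_entry x)"
    unfolding matrix_vector_mult_def using row(2) min_entry_le_max_entry[of x]
    by (auto intro!: sum_mono mult_left_mono)
  then show ?thesis
    by (simp add: sum_distrib_right[symmetric] row(1))
qed

lemma stochastic_mult_vec_diff_le:
  assumes "stochastic M" "c \<le> row_overlap M i k"
  shows "(M *v x) $ i - (M *v x) $ k \<le> (1 - c) * (max_entry x - min_entry x)"
proof -
  define m where "m l = min (M $ i $ l) (M $ k $ l)" for l
  define s where "s = (\<Sum>l\<in>UNIV. m l)"
  have rows: "(\<Sum>l\<in>UNIV. M $ i $ l) = 1" "(\<Sum>l\<in>UNIV. M $ k $ l) = 1"
    using assms(1) unfolding stochastic_def by auto
  have bounds: "min_entry x \<le> x $ l" "x $ l \<le> max_entry x" for l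
    using min_entry_le_max_entry by auto
  text \<open>Both rows share the common mass m; only the remaining mass 1 - s can move apart.\<close>
  have "(M *v x) $ i = (\<Sum>l\<in>UNIV. m l * x $ l) + (\<Sum>l\<in>UNIV. (M $ i $ l - m l) * x $ l)"
    by (simp add: matrix_vector_mult_def sum.distrib[symmetric] algebra_simps)
  also have "\<dots> \<le> (\<Sum>l\<in>UNIV. m l * x $ l) + (\<Sum>l\<in>UNIV. (M $ i $ l - m l) * max_entry x)"
    using bounds by (auto intro!: sum_mono mult_left_mono simp: m_def)
  finally have upper: "(M *v x) $ i \<le> (\<Sum>l\<in>UNIV. m l * x $ l) + (1 - s) * max_entry x"
    by (simp add: sum_distrib_right[symmetric] sum_subtractf rows s_def)
  have "(M *v x) $ k = (\<Sum>l\<in>UNIV. m l * x $ l) + (\<Sum>l\<in>UNIV. (M $ k $ l - m l) * x $ l)"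
    by (simp add: matrix_vector_mult_def sum.distrib[symmetric] algebra_simps)
  also have "\<dots> \<ge> (\<Sum>l\<in>UNIV. m l * x $ l) + (\<Sum>l\<in>UNIV. (M $ k $ l - m l) * min_entry x)"
    using bounds by (auto intro!: sum_mono mult_left_mono simp: m_def)
  finally have lower: "(M *v x) $ k \<ge> (\<Sum>l\<in>UNIV. m l * x $ l) + (1 - s) * min_entry x"
    by (simp add: sum_distrib_right[symmetric] sum_subtractf rows s_def)
  have "(1 - s) * (max_entry x - min_entry x) \<le> (1 - c) * (max_entry x - min_entry x)"
    using assms(2) bounds[of undefined] unfolding row_overlap_def s_def m_def
    by (intro mult_right_mono) auto
  with upper lower show ?thesis
    by (simp add: algebra_simps)
qed

lemma stochastic_mult_vec_entry_range:
  assumes "stochastic M"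
  shows "max_entry (M *v x) \<le> max_entry x \<and> min_entry x \<le> min_entry (M *v x)"
  by (metis assms max_entry_attained min_entry_attained stochastic_mult_vec_bounds)

lemma stochastic_mult_vec_spread_le:
  assumes "stochastic M" "\<forall>i k. c \<le> row_overlap M i k"
  shows "max_entry (M *v x) - min_entry (M *v x) \<le> (1 - c) * (max_entry x - min_entry x)"
  by (metis assms max_entry_attained min_entry_attained stochastic_mult_vec_diff_le)

lemma decseq_tendsto_zero_of_geometric_subseq:
  fixes D :: "nat \<Rightarrow> real"
  assumes "decseq D" "\<forall>n. 0 \<le> D n" "\<forall>r. D (w (Suc r)) \<le> q * D (w r)" "0 \<le> q" "q < 1"
  shows "D \<longlonglongrightarrow> 0"
proof (rule LIMSEQ_I)
  fix e :: real
  assume "0 < e"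
  have geometric: "D (w r) \<le> q ^ r * D (w 0)" for r
  proof (induction r)
    case (Suc r)
    have "D (w (Suc r)) \<le> q * D (w r)"
      using assms(3) by blast
    also have "\<dots> \<le> q * (q ^ r * D (w 0))"
      using Suc.IH assms(4) by (rule mult_left_mono)
    finally show ?case
      by simp
  qed simp
  have "(\<lambda>r. q ^ r * D (w 0)) \<longlonglongrightarrow> 0"
    using assms(4,5) by (intro tendsto_mult_left_zero LIMSEQ_power_zero) simp
  from LIMSEQ_D[OF this \<open>0 < e\<close>] obtain r0 where "\<forall>r\<ge>r0. norm (q ^ r * D (w 0) - 0) < e"
    by blast
  then have "q ^ r0 * D (w 0) < e"
    by fastforce
  have "norm (D n - 0) < e" if "w r0 \<le> n" for n
  proof -
    have "D n \<le> D (w r0)"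
      using assms(1) that by (rule decseqD)
    with geometric[of r0] \<open>q ^ r0 * D (w 0) < e\<close> assms(2) show ?thesis
      by simp
  qed
  then show "\<exists>no. \<forall>n\<ge>no. norm (D n - 0) < e"
    by blast
qed

lemma stochastic_iteration_consensus:
  fixes x :: "nat \<Rightarrow> real^'n::finite"
  assumes step: "\<forall>k. \<exists>M. stochastic M \<and> x (Suc k) = M *v x k"
    and window: "\<forall>r. \<exists>M. stochastic M \<and> (\<forall>i k. c \<le> row_overlap M i k) \<and> x (w (Suc r)) = M *v x (w r)"
    and "0 < c" "c \<le> 1"
  obtains L where "\<forall>i. (\<lambda>k. x k $ i) \<longlonglongrightarrow> L"
proof -
  define hi where "hi k = max_entry (x k)" for k
  define lo where "lo k = min_entry (x k)" for k
  have hi_lo_step: "hi (Suc k) \<le> hi k \<and> lo k \<le> lo (Suc k)" for k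
    using step stochastic_mult_vec_entry_range unfolding hi_def lo_def by metis
  have "decseq (\<lambda>k. hi k - lo k)"
    using hi_lo_step by (intro decseq_SucI) (simp add: diff_mono)
  moreover have "hi (w (Suc r)) - lo (w (Suc r)) \<le> (1 - c) * (hi (w r) - lo (w r))" for r
    using window stochastic_mult_vec_spread_le unfolding hi_def lo_def by metis
  ultimately have "(\<lambda>k. hi k - lo k) \<longlonglongrightarrow> 0"
    using assms(3,4) min_entry_le_max_entry
    by (intro decseq_tendsto_zero_of_geometric_subseq[where q = "1 - c"])
      (auto simp: hi_def lo_def intro: order_trans)
  then have "(\<lambda>k. lo k - hi k) \<longlonglongrightarrow> 0"
    using tendsto_minus by fastforce
  moreover have "lo k \<le> hi k" for k
    unfolding hi_def lo_def by (meson min_entry_le_max_entry order_trans)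
  ultimately obtain L where "lo \<longlonglongrightarrow> L" "hi \<longlonglongrightarrow> L"
    using nested_sequence_unique[of lo hi] hi_lo_step by blast
  show thesis
  proof (rule that, intro allI)
    fix i
    show "(\<lambda>k. x k $ i) \<longlonglongrightarrow> L"
      by (rule tendsto_sandwich[OF _ _ \<open>lo \<longlonglongrightarrow> L\<close> \<open>hi \<longlonglongrightarrow> L\<close>])
        (simp_all add: hi_def lo_def min_entry_le_max_entry)
  qed
qed

lemma column_matrix_mult: "column l (A ** B) = A *v column l B"
  by (simp add: column_def matrix_matrix_mult_def matrix_vector_mult_def vec_eq_iff)

lemma lprod_column_consensus:
  fixes P :: "nat \<Rightarrow> real^'n::finite^'n"
  assumes stoch: "\<forall>k\<ge>1. stochastic (P k)"
    and window: "\<forall>r. \<exists>M. stochastic M \<and> (\<forall>i k. c \<le> row_overlap M i k) \<and>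
        lprod P (w (Suc r)) = M ** lprod P (w r)"
    and "0 < c" "c \<le> 1"
  shows "\<exists>L. \<forall>i. (\<lambda>k. lprod P k $ i $ l) \<longlonglongrightarrow> L"
proof -
  have "stochastic (P (Suc k)) \<and> column l (lprod P (Suc k)) = P (Suc k) *v column l (lprod P k)" for k
    using stoch by (simp add: column_matrix_mult)
  then have "\<forall>k. \<exists>M. stochastic M \<and> column l (lprod P (Suc k)) = M *v column l (lprod P k)"
    by blast
  moreover have "\<forall>r. \<exists>M. stochastic M \<and> (\<forall>i k. c \<le> row_overlap M i k) \<and>
      column l (lprod P (w (Suc r))) = M *v column l (lprod P (w r))"
  proof
    fix r
    obtain M where "stochastic M" "\<forall>i k. c \<le> row_overlap M i k"
      and "lprod P (w (Suc r)) = M ** lprod P (w r)"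
      using window by blast
    then show "\<exists>M. stochastic M \<and> (\<forall>i k. c \<le> row_overlap M i k) \<and>
        column l (lprod P (w (Suc r))) = M *v column l (lprod P (w r))"
      by (intro exI[of _ M]) (simp add: column_matrix_mult)
  qed
  ultimately obtain L where "\<forall>i. (\<lambda>k. column l (lprod P k) $ i) \<longlonglongrightarrow> L"
    using stochastic_iteration_consensus[where x = "\<lambda>k. column l (lprod P k)", OF _ _ assms(3,4)] by blast
  then show ?thesis
    by (auto simp: column_def)
qed

lemma lprod_tendsto_rank_one:
  fixes P :: "nat \<Rightarrow> real^'n::finite^'n"
  assumes stoch: "\<forall>k\<ge>1. stochastic (P k)"
    and "\<forall>r. \<exists>M. stochastic M \<and> (\<forall>i k. c \<le> row_overlap M i k) \<and>
        lprod P (w (Suc r)) = M ** lprod P (w r)"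
    and "0 < c" "c \<le> 1"
  shows "\<exists>v::real^'n. (\<forall>i. v $ i \<ge> 0) \<and> (\<Sum>i\<in>UNIV. v $ i) = 1 \<and>
           (\<lambda>k. lprod P k) \<longlonglongrightarrow> (\<chi> i l. v $ l)"
proof -
  have "\<forall>l. \<exists>L. \<forall>i. (\<lambda>k. lprod P k $ i $ l) \<longlonglongrightarrow> L"
    using lprod_column_consensus[OF assms] by blast
  from choice[OF this] obtain L where L: "\<And>i l. (\<lambda>k. lprod P k $ i $ l) \<longlonglongrightarrow> L l"
    by blast
  define v :: "real^'n" where "v = (\<chi> l. L l)"
  have lim: "(\<lambda>k. lprod P k $ i $ l) \<longlonglongrightarrow> v $ l" for i l
    unfolding v_def using L by simp
  have lstoch: "stochastic (lprod P k)" for k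
    using lprod_stochastic[OF stoch] .
  have "v $ l \<ge> 0" for l
    using LIMSEQ_le_const[OF lim[of undefined l]] lstoch unfolding stochastic_def by auto
  moreover have "(\<Sum>l\<in>UNIV. v $ l) = 1"
  proof -
    have "(\<lambda>k. \<Sum>l\<in>UNIV. lprod P k $ undefined $ l) \<longlonglongrightarrow> (\<Sum>l\<in>UNIV. v $ l)"
      by (intro tendsto_sum lim)
    then show ?thesis
      using lstoch unfolding stochastic_def by (simp add: LIMSEQ_const_iff)
  qed
  moreover have "(\<lambda>k. lprod P k) \<longlonglongrightarrow> (\<chi> i l. v $ l)"
    by (intro vec_tendstoI) (simp add: lim)
  ultimately show ?thesis
    by blast
qed

lemma products_card_scrambling:
  assumes "\<forall>M\<in>Q. stochastic M \<and> expands 0 M" "\<forall>M\<in>S. stochastic M \<and> expands 1 M"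
    and "M \<in> products Q S L CARD('n)"
  shows "stochastic (M :: real^'n::finite^'n) \<and> scrambling M"
  using products_stochastic_expands[OF assms(1,2)] assms(3) expands_card_imp_scrambling by blast

lemma lprod_windows_uniform_overlap:
  fixes Q :: "(real^'n::finite^'n) set" and j :: "nat \<Rightarrow> nat"
  assumes "compact Q" "\<forall>M\<in>Q. classW M" "\<forall>k\<ge>1. P k \<in> Q" "strict_mono j"
    and "\<forall>r. sarymsakov (P (j r))" "compact (range (\<lambda>r. P (j r)))"
    and T: "\<forall>r. j (Suc r) - j r \<le> T"
  obtains c where "0 < c" "c \<le> 1"
    "\<forall>r. \<exists>M. stochastic M \<and> (\<forall>i k. c \<le> row_overlap M i k) \<and>
       lprod P (j (Suc r * CARD('n))) = M ** lprod P (j (r * CARD('n)))"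
proof -
  define N where "N = CARD('n)"
  define S where "S = range (\<lambda>r. P (j r))"
  define K where "K = (\<Union>L\<le>N * T. products Q S L N)"
  have "compact K"
    unfolding K_def S_def using assms(1,6) by (intro compact_UN compact_products) auto
  moreover have K: "\<forall>M\<in>K. stochastic M \<and> scrambling M"
    using products_card_scrambling[of Q S] assms(2,5)
    unfolding K_def S_def N_def classW_iff_expands sarymsakov_iff_expands by blast
  ultimately obtain c where c: "0 < c" "c \<le> 1" "\<forall>M\<in>K. \<forall>i k. c \<le> row_overlap M i k"
    by (rule compact_scrambling_overlap_bound)
  have "\<exists>M. stochastic M \<and> (\<forall>i k. c \<le> row_overlap M i k) \<and>
      lprod P (j (Suc r * N)) = M ** lprod P (j (r * N))" for r
  proof -
    obtain L M where "L \<le> N * T" "M \<in> products Q S L N"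
      and M: "lprod P (j (r * N + N)) = M ** lprod P (j (r * N))"
      using lprod_block_factorization[OF assms(4,3) T] unfolding S_def by blast
    then have "M \<in> K"
      unfolding K_def by blast
    then show ?thesis
      using K c(3) M by (intro exI[of _ M]) (simp add: add.commute)
  qed
  with c(1,2) that show thesis
    unfolding N_def by blast
qed

theorem theorem6:
  fixes \<P> :: "(real^'n::finite^'n) set"
    and P :: "nat \<Rightarrow> real^'n^'n"
    and j :: "nat \<Rightarrow> nat"
  assumes "compact \<P>"
    and "\<forall>Q\<in>\<P>. classW Q"
    and "\<forall>k\<ge>1. P k \<in> \<P>"
    and "strict_mono j" and "j 0 \<ge> 1"
    and "\<forall>r. sarymsakov (P (j r))"
    and "compact (range (\<lambda>r. P (j r)))"
    and "\<exists>T::nat. \<forall>r. j (Suc r) - j r \<le> T"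
  shows "\<exists>c::real^'n. (\<forall>i. c $ i \<ge> 0) \<and> (\<Sum>i\<in>UNIV. c $ i) = 1 \<and>
           (\<lambda>k. lprod P k) \<longlonglongrightarrow> (\<chi> i l. c $ l)"
proof -
  obtain T :: nat where "\<forall>r. j (Suc r) - j r \<le> T"
    using assms(8) by blast
  then obtain c where "0 < c" "c \<le> 1"
    and window: "\<forall>r. \<exists>M. stochastic M \<and> (\<forall>i k. c \<le> row_overlap M i k) \<and>
      lprod P (j (Suc r * CARD('n))) = M ** lprod P (j (r * CARD('n)))"
    using lprod_windows_uniform_overlap[OF assms(1,2,3,4,6,7)] by blast
  have "\<forall>k\<ge>1. stochastic (P k)"
    using assms(2,3) by (simp add: classW_iff_expands)
  from lprod_tendsto_rank_one[where w = "\<lambda>r. j (r * CARD('n))", OF this window \<open>0 < c\<close> \<open>c \<le> 1\<close>]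
  show ?thesis .
qed

end
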